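(* If $R\subseteq\mathbb{N}$ has large gaps, then $R$ is rich.
   Context: A set $R\subseteq\mathbb{N}$ has large gaps if $R$ is infinite, $0\notin R$, and for every $k\in\mathbb{N}$ with $k>0$ there exists $q\in R$ such that $[\lfloor q/k\rfloor,\,k\cdot q]\cap R=\{q\}$ (intervals of natural numbers). A set $R\subseteq\mathbb{N}$ is rich if for all $s,u,v\in\mathbb{N}$, all $\bar a_0\in\{0,1\}^s\setminus\{\bar0\}$, $\bar a_1,\dots,\bar a_u\in\mathbb{N}^s$ and all $c_1,\dots,c_u\in\mathbb{N}$ with $(\bar a_0,0)\ne(\bar a_i,c_i)$ for all $i\in\{1,\dots,u\}$, there exist $\bar x,\bar y\in(v+\mathbb{N})^s$ (vectors with all entries $\ge v$) such that $\bar a_0^\top\bar x\in R\iff\bar a_0^\top\bar y\notin R$, and $\bar a_i^\top\bar x-c_i\in R\iff\bar a_i^\top\bar y-c_i\in R$ for all $i\in\{1,\dots,u\}$. *)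

theory Defs
  imports Main
begin

definition dotp :: "nat list \<Rightarrow> nat list \<Rightarrow> nat" where
  "dotp a x = sum_list (map2 (*) a x)"

definition large_gaps :: "nat set \<Rightarrow> bool" where
  "large_gaps R \<longleftrightarrow> infinite R \<and> 0 \<notin> R \<and>
     (\<forall>k::nat. k > 0 \<longrightarrow> (\<exists>q\<in>R. {q div k .. k * q} \<inter> R = {q}))"

definition rich :: "nat set \<Rightarrow> bool" where
  "rich R \<longleftrightarrow>
    (\<forall>s u v :: nat. \<forall>a0 :: nat list. \<forall>ac :: (nat list \<times> nat) list.
       length a0 = s \<longrightarrow> set a0 \<subseteq> {0, 1} \<longrightarrow> a0 \<noteq> replicate s 0 \<longrightarrow>
       length ac = u \<longrightarrow> (\<forall>(a, c) \<in> set ac. length a = s) \<longrightarrow>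
       (\<forall>(a, c) \<in> set ac. (a0, 0) \<noteq> (a, c)) \<longrightarrow>
       (\<exists>x y :: nat list. length x = s \<and> length y = s \<and>
          (\<forall>i\<in>set x. v \<le> i) \<and> (\<forall>i\<in>set y. v \<le> i) \<and>
          (dotp a0 x \<in> R \<longleftrightarrow> dotp a0 y \<notin> R) \<and>
          (\<forall>(a, c) \<in> set ac.
             (int (dotp a x) - int c \<in> int ` R \<longleftrightarrow> int (dotp a y) - int c \<in> int ` R))))"

end

theory Submission
  imports Defs
begin

text \<open>
  Pick a coordinate j with a0!j = 1. All other coordinates are fixed to a vector z (entries at
  least v) on which every constraint vector a \<noteq> a0 with a!j = 1 has, after zeroing the j-th
  entry, a dot product differing from that of a0 by more than every shift c. The j-th
  coordinate is then set so that a0 takes the values q and q - 1 at x and y, where q \<in> R is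
  isolated in the window [q div 2, k q] and k exceeds every coefficient sum involved; such q
  exist by the large gaps. Constraints with a!j = 0 do not see the change, and for all others
  both values minus c fall into the window without hitting q, so neither lies in R.
\<close>

lemma dotp_Cons: "dotp (a # as) (z # zs) = a * z + dotp as zs"
  by (simp add: dotp_def)

lemma dotp_list_update:
  "length a = length z \<Longrightarrow> j < length z \<Longrightarrow>
   dotp a (z[j := t]) = dotp (a[j := 0]) z + a ! j * t"
proof (induction a arbitrary: z j)
  case Nil
  then show ?case by simp
next
  case (Cons a1 as)
  then obtain z1 zs where "z = z1 # zs" by (cases z) auto
  with Cons show ?case by (cases j) (simp_all add: dotp_Cons)
qed

lemma list_update_zero_eq_imp_eq:
  "a[j := 0] = b[j := 0] \<Longrightarrow> a ! j = b ! j \<Longrightarrow> j < length a \<Longrightarrow> a = b"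
  by (metis list_update_id list_update_overwrite)

lemma ex_nth_eq_1_if_not_replicate_0:
  assumes "set a \<subseteq> {0, 1::nat}" "a \<noteq> replicate (length a) 0"
  obtains j where "j < length a" "a ! j = 1"
proof -
  have "\<exists>j<length a. a ! j \<noteq> 0"
    using assms(2) by (metis (no_types) length_replicate nth_equalityI nth_replicate)
  then show thesis
    using assms(1) that by (metis insertE nth_mem singletonD subsetD)
qed

text \<open>The first coordinate is chosen so large that it dominates the tails whenever the
  first entries differ; equal first entries are handled by induction on the tails.\<close>

lemma exists_separating_vector:
  assumes "finite B" "length b0 = n" "\<forall>b\<in>B. length b = n \<and> b \<noteq> b0"
  shows "\<exists>z. length z = n \<and> (\<forall>i\<in>set z. v \<le> i) \<and>
           (\<forall>b\<in>B. dotp b z + K < dotp b0 z \<or> dotp b0 z + K < dotp b z)"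
  using assms
proof (induction n arbitrary: B b0)
  case 0
  then show ?case by auto
next
  case (Suc n)
  then obtain h0 bs0 where b0: "b0 = h0 # bs0" "length bs0 = n"
    by (metis length_Suc_conv)
  have lenB: "\<exists>h bs. b = h # bs \<and> length bs = n" if "b \<in> B" for b
    using Suc.prems(3) that by (simp add: length_Suc_conv)
  define B' where "B' = tl ` {b \<in> B. hd b = h0}"
  have "finite B'"
    unfolding B'_def using Suc.prems(1) by simp
  moreover have "\<forall>b\<in>B'. length b = n \<and> b \<noteq> bs0"
  proof
    fix b' assume "b' \<in> B'"
    then obtain b where b: "b \<in> B" "hd b = h0" "b' = tl b" unfolding B'_def by blast
    then obtain h bs where "b = h # bs" "length bs = n" using lenB by blast
    then show "length b' = n \<and> b' \<noteq> bs0" using b Suc.prems(3) b0(1) by auto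
  qed
  ultimately obtain zs where zs: "length zs = n" "\<forall>i\<in>set zs. v \<le> i"
    "\<forall>b\<in>B'. dotp b zs + K < dotp bs0 zs \<or> dotp bs0 zs + K < dotp b zs"
    using Suc.IH[OF _ b0(2)] by blast
  define S where "S = (\<Sum>b\<in>B. dotp (tl b) zs) + dotp bs0 zs"
  define z1 where "z1 = v + K + 1 + S"
  have "dotp b (z1 # zs) + K < dotp b0 (z1 # zs) \<or> dotp b0 (z1 # zs) + K < dotp b (z1 # zs)"
    if b_in: "b \<in> B" for b
  proof -
    obtain h bs where b: "b = h # bs" using lenB b_in by blast
    have "dotp (tl b) zs \<le> (\<Sum>b\<in>B. dotp (tl b) zs)"
      by (rule member_le_sum) (use b_in Suc.prems(1) in auto)
    then have tails: "dotp bs zs + dotp bs0 zs + K < z1"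
      unfolding z1_def S_def b by simp
    have expand: "dotp b (z1 # zs) = h * z1 + dotp bs zs" "dotp b0 (z1 # zs) = h0 * z1 + dotp bs0 zs"
      unfolding b b0(1) by (simp_all add: dotp_Cons)
    consider "h = h0" | "h < h0" | "h0 < h" by linarith
    then show ?thesis
    proof cases
      case 1
      then have "bs \<in> B'" unfolding B'_def using b_in b by force
      then show ?thesis using zs(3) expand 1 by auto
    next
      case 2
      then have "h * z1 + z1 \<le> h0 * z1"
        using mult_le_mono1[of "h + 1" h0 z1] by simp
      then show ?thesis using tails expand by linarith
    next
      case 3
      then have "h0 * z1 + z1 \<le> h * z1"
        using mult_le_mono1[of "h0 + 1" h z1] by simp
      then show ?thesis using tails expand by linarith
    qed
  qed
  moreover have "\<forall>i\<in>set (z1 # zs). v \<le> i" using zs(2) unfolding z1_def by auto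
  ultimately show ?case using zs(1) by (intro exI[of _ "z1 # zs"]) auto
qed

lemma int_diff_in_int_image_iff:
  "int n - int c \<in> int ` R \<longleftrightarrow> c \<le> n \<and> n - c \<in> R"
proof
  assume "int n - int c \<in> int ` R"
  then obtain r where "r \<in> R" "int n - int c = int r" by auto
  then show "c \<le> n \<and> n - c \<in> R"
    by (metis add_diff_cancel_right' diff_add_cancel le_add2 nat_int of_nat_add)
next
  assume "c \<le> n \<and> n - c \<in> R"
  then show "int n - int c \<in> int ` R" by (metis image_eqI of_nat_diff)
qed

text \<open>Two further points of R force the isolated point to exceed any prescribed bound N:
  below N the window would start at 0 and contain both.\<close>

lemma large_gaps_isolated_point:
  assumes "large_gaps R"
  obtains q where "q \<in> R" "N \<le> q" "\<And>m. m \<in> R \<Longrightarrow> q div 2 \<le> m \<Longrightarrow> m \<le> k * q \<Longrightarrow> m = q"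
proof -
  have R: "infinite R" "0 \<notin> R" "\<And>k. k > 0 \<Longrightarrow> \<exists>q\<in>R. {q div k .. k * q} \<inter> R = {q}"
    using assms unfolding large_gaps_def by simp_all
  obtain r1 where "r1 \<in> R" using infinite_imp_nonempty[OF R(1)] by blast
  moreover obtain r2 where "r2 \<in> R - {r1}"
    using infinite_imp_nonempty[OF infinite_remove[OF R(1)]] by blast
  ultimately have r: "r1 \<in> R" "r2 \<in> R" "r1 \<noteq> r2" by auto
  define k' where "k' = k + N + r1 + r2 + 2"
  then have "0 < k'" by simp
  then obtain q where q: "q \<in> R" "{q div k' .. k' * q} \<inter> R = {q}"
    using R(3) by blast
  have "1 \<le> q" using q(1) R(2) by (cases q) auto
  have iso: "m = q" if "m \<in> R" "q div k' \<le> m" "m \<le> k' * q" for m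
  proof -
    have "m \<in> {q div k' .. k' * q} \<inter> R" using that by simp
    then show ?thesis using q(2) by simp
  qed
  have "N \<le> q"
  proof (rule ccontr)
    assume "\<not> N \<le> q"
    then have "q < k'" unfolding k'_def by simp
    then have "q div k' = 0" by simp
    moreover have "k' \<le> k' * q" using \<open>1 \<le> q\<close> by simp
    then have "r1 \<le> k' * q" "r2 \<le> k' * q" unfolding k'_def by linarith+
    ultimately have "r1 = q" "r2 = q" using iso r by simp_all
    then show False using r(3) by simp
  qed
  moreover have "m = q" if "m \<in> R" "q div 2 \<le> m" "m \<le> k * q" for m
  proof (rule iso[OF that(1)])
    have "q div k' \<le> q div 2" unfolding k'_def by (simp add: div_le_mono2)
    then show "q div k' \<le> m" using that(2) by linarith
    have "k * q \<le> k' * q" unfolding k'_def by (intro mult_le_mono1) simp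
    then show "m \<le> k' * q" using that(3) by linarith
  qed
  ultimately show thesis using that q(1) by blast
qed

text \<open>A + t Y is the value of a constraint with j-th coefficient t at a point where a0 takes
  the value A0 + Y. For t = 1 the hypothesis rules out hitting q + c exactly; for t \<ge> 2 the
  value already overshoots q + c.\<close>

lemma shifted_constraint_value_not_in:
  assumes iso: "\<And>m. m \<in> R \<Longrightarrow> q div 2 \<le> m \<Longrightarrow> m \<le> k * q \<Longrightarrow> m = q"
    and q: "2 * A0 + 2 * c + 4 \<le> q"
    and t: "1 \<le> t" "A + t \<le> k" "t = 1 \<Longrightarrow> A \<noteq> A0 + c \<and> A \<noteq> A0 + c + 1"
    and Y: "Y \<in> {q - A0, q - A0 - 1}"
  shows "int (A + t * Y) - int c \<notin> int ` R"
proof -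
  define m where "m = A + t * Y"
  have Y_bounds: "q \<le> Y + A0 + 1" "Y + A0 \<le> q" using Y q by auto
  have "2 * (q div 2) \<le> q" by simp
  moreover have "Y \<le> t * Y" using t(1) by simp
  ultimately have lower: "q div 2 + c \<le> m" using q Y_bounds unfolding m_def by linarith
  have "t * Y \<le> t * q" using Y_bounds by simp
  then have "m \<le> A + t * q" unfolding m_def by simp
  also have "\<dots> \<le> (A + t) * q"
  proof -
    have "A \<le> A * q" using q by simp
    then show ?thesis by (simp add: algebra_simps)
  qed
  also have "\<dots> \<le> k * q" using t(2) by simp
  finally have upper: "m \<le> k * q" .
  have "m \<noteq> q + c"
  proof (cases "t = 1")
    case True
    then show ?thesis using t(3) Y q unfolding m_def by auto
  next
    case False
    then have "2 * Y \<le> t * Y" using t(1) by (intro mult_le_mono1) simp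
    then have "q + c < m" using Y_bounds q unfolding m_def by linarith
    then show ?thesis by simp
  qed
  then have "m - c \<notin> R" using iso[of "m - c"] lower upper by linarith
  then show ?thesis unfolding m_def[symmetric] int_diff_in_int_image_iff by simp
qed

lemma rich_witness:
  assumes gaps: "large_gaps R"
    and a0: "length a0 = s" "j < s" "a0 ! j = 1"
    and lens: "\<forall>(a, c) \<in> set ac. length a = s"
    and neq: "\<forall>(a, c) \<in> set ac. (a0, 0) \<noteq> (a, c)"
  shows "\<exists>x y :: nat list. length x = s \<and> length y = s \<and>
          (\<forall>i\<in>set x. v \<le> i) \<and> (\<forall>i\<in>set y. v \<le> i) \<and>
          (dotp a0 x \<in> R \<longleftrightarrow> dotp a0 y \<notin> R) \<and>
          (\<forall>(a, c) \<in> set ac.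
             (int (dotp a x) - int c \<in> int ` R \<longleftrightarrow> int (dotp a y) - int c \<in> int ` R))"
proof -
  define C where "C = sum_list (map snd ac)"
  have cC: "c \<le> C" if "(a, c) \<in> set ac" for a c
    unfolding C_def using that by (force intro: member_le_sum_list)
  define B where "B = (\<lambda>(a, c). a[j := 0]) ` {(a, c) \<in> set ac. a ! j = 1 \<and> a \<noteq> a0}"
  have "finite B"
    unfolding B_def by (rule finite_imageI, rule finite_subset[of _ "set ac"]) auto
  moreover have "\<forall>b\<in>B. length b = s \<and> b \<noteq> a0[j := 0]"
    unfolding B_def using lens a0 list_update_zero_eq_imp_eq by fastforce
  ultimately obtain z where z: "length z = s" "\<forall>i\<in>set z. v \<le> i"
    "\<forall>b\<in>B. dotp b z + (C + 1) < dotp (a0[j := 0]) z \<or> dotp (a0[j := 0]) z + (C + 1) < dotp b z"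
    using exists_separating_vector[of B "a0[j := 0]" s v "C + 1"] a0(1) by auto
  define A0 where "A0 = dotp (a0[j := 0]) z"
  define k where "k = 1 + sum_list (map (\<lambda>(a, c). dotp (a[j := 0]) z + a ! j) ac)"
  have Ak: "dotp (a[j := 0]) z + a ! j \<le> k" if "(a, c) \<in> set ac" for a c
  proof -
    have "dotp (a[j := 0]) z + a ! j \<in> set (map (\<lambda>(a, c). dotp (a[j := 0]) z + a ! j) ac)"
      using that by force
    then show ?thesis unfolding k_def using member_le_sum_list by fastforce
  qed
  obtain q where q: "q \<in> R" "2 * A0 + 2 * C + v + 4 \<le> q"
    and iso: "\<And>m. m \<in> R \<Longrightarrow> q div 2 \<le> m \<Longrightarrow> m \<le> k * q \<Longrightarrow> m = q"
    using large_gaps_isolated_point[OF gaps] by metis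
  define x where "x = z[j := q - A0]"
  define y where "y = z[j := q - A0 - 1]"
  have dotp_x: "dotp a x = dotp (a[j := 0]) z + a ! j * (q - A0)"
    and dotp_y: "dotp a y = dotp (a[j := 0]) z + a ! j * (q - A0 - 1)" if "length a = s" for a
    unfolding x_def y_def using dotp_list_update that z(1) a0(2) by auto
  have "q - 1 \<notin> R"
  proof
    have "q div 2 \<le> q - 1" using q(2) by linarith
    moreover have "q - 1 \<le> k * q" unfolding k_def by simp
    moreover assume "q - 1 \<in> R"
    ultimately show False using iso q(2) by fastforce
  qed
  moreover have "dotp a0 x = q" "dotp a0 y = q - 1"
    using dotp_x[OF a0(1)] dotp_y[OF a0(1)] a0(3) q(2) unfolding A0_def by auto
  ultimately have a0_changes: "dotp a0 x \<in> R \<longleftrightarrow> dotp a0 y \<notin> R" using q(1) by simp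
  have "int (dotp a x) - int c \<in> int ` R \<longleftrightarrow> int (dotp a y) - int c \<in> int ` R"
    if ac: "(a, c) \<in> set ac" for a c
  proof -
    have la: "length a = s" using lens ac by auto
    show ?thesis
    proof (cases "a ! j = 0")
      case True
      then show ?thesis using dotp_x[OF la] dotp_y[OF la] by simp
    next
      case False
      then have "1 \<le> a ! j" by simp
      have qc: "2 * A0 + 2 * c + 4 \<le> q" using q(2) cC[OF ac] by simp
      have sep: "dotp (a[j := 0]) z \<noteq> A0 + c \<and> dotp (a[j := 0]) z \<noteq> A0 + c + 1"
        if "a ! j = 1"
      proof (cases "a = a0")
        case True
        then show ?thesis using neq ac unfolding A0_def by auto
      next
        case False
        then have "a[j := 0] \<in> B" unfolding B_def using ac \<open>a ! j = 1\<close> by force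
        then have "dotp (a[j := 0]) z + (C + 1) < A0 \<or> A0 + (C + 1) < dotp (a[j := 0]) z"
          using z(3) unfolding A0_def by blast
        then show ?thesis using cC[OF ac] by auto
      qed
      have "int (dotp (a[j := 0]) z + a ! j * Y) - int c \<notin> int ` R" if "Y \<in> {q - A0, q - A0 - 1}" for Y
        using shifted_constraint_value_not_in[OF iso qc \<open>1 \<le> a ! j\<close> Ak[OF ac] sep that] .
      then show ?thesis using dotp_x[OF la] dotp_y[OF la] by simp
    qed
  qed
  moreover have "\<forall>i\<in>set x. v \<le> i" "\<forall>i\<in>set y. v \<le> i"
    unfolding x_def y_def using z(2) q(2) set_update_subset_insert by fastforce+
  moreover have "length x = s" "length y = s" using z(1) unfolding x_def y_def by simp_all
  ultimately show ?thesis using a0_changes by blast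
qed

theorem proposition6p10:
  fixes R :: "nat set"
  assumes "large_gaps R"
  shows "rich R"
  unfolding rich_def
proof (intro allI impI)
  fix s u v :: nat and a0 :: "nat list" and ac :: "(nat list \<times> nat) list"
  assume a0: "length a0 = s" "set a0 \<subseteq> {0, 1}" "a0 \<noteq> replicate s 0"
    and lens: "\<forall>(a, c) \<in> set ac. length a = s"
    and neq: "\<forall>(a, c) \<in> set ac. (a0, 0) \<noteq> (a, c)"
  obtain j where "j < length a0" "a0 ! j = 1"
    using ex_nth_eq_1_if_not_replicate_0[OF a0(2)] a0(1,3) by blast
  then show "\<exists>x y. length x = s \<and> length y = s \<and> (\<forall>i\<in>set x. v \<le> i) \<and> (\<forall>i\<in>set y. v \<le> i) \<and>
          (dotp a0 x \<in> R \<longleftrightarrow> dotp a0 y \<notin> R) \<and>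
          (\<forall>(a, c) \<in> set ac.
             (int (dotp a x) - int c \<in> int ` R \<longleftrightarrow> int (dotp a y) - int c \<in> int ` R))"
    using rich_witness[OF assms a0(1) _ _ lens neq] a0(1) by blast
qed

end
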